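(* Let $\mathcal A$ be a toric arrangement in $T$ equal to its saturation, let $\mathcal F$ be a smooth projective fan compatible with $\mathcal A$, let $\mathcal G$ be a smooth projective refinement of $\mathcal F$, and let $\psi^{\mathcal F}_{\mathcal G}:X_{\mathcal G}\to X_{\mathcal F}$ be the unique $T$-equivariant projective morphism of toric varieties extending the identity of $T$. Then for each layer $\mathcal K_{\Gamma,\phi}\in\mathcal A$, the preimage under $\psi^{\mathcal F}_{\mathcal G}$ of the closure of $\mathcal K_{\Gamma,\phi}$ in $X_{\mathcal F}$ equals the closure of $\mathcal K_{\Gamma,\phi}$ in $X_{\mathcal G}$. (In particular $\mathcal G$ is also compatible with $\mathcal A$.)
   Context: $T$ is a complex algebraic torus with character lattice $X^*(T)$, $V=X_*(T)\otimes\mathbb R$. A layer is $\mathcal K_{\Gamma,\phi}=\{t\in T:\chi(t)=\phi(\chi)\ \forall\chi\in\Gamma\}$, where $\Gamma$ is a split direct summand of $X^*(T)$ and $\phi:\Gamma\to\mathbb C^*$ a homomorphism. A toric arrangement is a finite set of layers; its saturation is the set of all connected components of intersections of its layers, and we assume $\mathcal A$ equals its saturation. For a toric variety, $X_{\mathcal F}$ denotes the smooth projective $T$-toric variety of the smooth projective fan $\mathcal F$. A finite set $\{\chi_1,\dots,\chi_s\}\subset X^*(T)$ has equal sign with respect to $\mathcal F$ if each function $\langle\chi_i,-\rangle$ is either $\ge0$ on $C$ or $\le 0$ on $C$ for every cone $C\in\mathcal F$. $\mathcal F$ is compatible with $\mathcal A$ if for every pair of layers $\mathcal K_{\Gamma,\phi}\subseteq\mathcal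 K_{\Gamma',\psi}$ in $\mathcal A$ there is an integral basis of $\Gamma$ having equal sign with respect to $\mathcal F$ whose intersection with $\Gamma'$ is a basis of $\Gamma'$ (having equal sign). A refinement $\mathcal G$ of $\mathcal F$ is a fan each of whose cones is contained in a cone of $\mathcal F$ and such that every cone of $\mathcal F$ is a union of cones of $\mathcal G$. *)

theory Defs
  imports "HOL-Analysis.Analysis"
begin

text \<open>We fix an identification T = (C^*)^n given by a basis.
  Characters X^*(T) = Z^n are  int^'n , cocharacters X_*(T) = Z^n are int^'n,
  V = X_*(T) (x) R = real^'n.\<close>

definition torus :: "(complex^'n) set" where
  "torus = {t. \<forall>i. t$i \<noteq> 0}"

definition char_val :: "int^'n \<Rightarrow> complex^'n \<Rightarrow> complex" where
  "char_val chi t = (\<Prod>i\<in>UNIV. (t$i) powi (chi$i))"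

definition pairing :: "int^'n \<Rightarrow> real^'n \<Rightarrow> real" where
  "pairing chi v = (\<Sum>i\<in>UNIV. of_int (chi$i) * v$i)"

definition lat_to_real :: "int^'n \<Rightarrow> real^'n" where
  "lat_to_real u = (\<chi> i. of_int (u$i))"

definition lattice_subgroup :: "(int^'n) set \<Rightarrow> bool" where
  "lattice_subgroup G \<longleftrightarrow> 0 \<in> G \<and> (\<forall>a\<in>G. \<forall>b\<in>G. a + b \<in> G \<and> - a \<in> G)"

definition split_summand :: "(int^'n) set \<Rightarrow> bool" where
  "split_summand G \<longleftrightarrow> lattice_subgroup G \<and>
     (\<exists>D. lattice_subgroup D \<and> G \<inter> D = {0} \<and> {a + b |a b. a \<in> G \<and> b \<in> D} = UNIV)"

definition char_hom :: "(int^'n) set \<Rightarrow> (int^'n \<Rightarrow> complex) \<Rightarrow> bool" where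
  "char_hom G phi \<longleftrightarrow> (\<forall>a\<in>G. phi a \<noteq> 0) \<and> (\<forall>a\<in>G. \<forall>b\<in>G. phi (a + b) = phi a * phi b)"

definition layer :: "(int^'n) set \<Rightarrow> (int^'n \<Rightarrow> complex) \<Rightarrow> (complex^'n) set" where
  "layer G phi = {t \<in> torus. \<forall>chi\<in>G. char_val chi t = phi chi}"

definition is_layer :: "(complex^'n) set \<Rightarrow> bool" where
  "is_layer K \<longleftrightarrow> (\<exists>G phi. split_summand G \<and> char_hom G phi \<and> K = layer G phi)"

definition int_span :: "(int^'n) set \<Rightarrow> (int^'n) set" where
  "int_span B = {(\<Sum>b\<in>B. c b *s b) | c. True}"

definition integral_basis :: "(int^'n) set \<Rightarrow> (int^'n) set \<Rightarrow> bool" where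
  "integral_basis G B \<longleftrightarrow> finite B \<and> B \<subseteq> G \<and>
     (\<forall>c. (\<Sum>b\<in>B. c b *s b) = 0 \<longrightarrow> (\<forall>b\<in>B. c b = 0)) \<and> int_span B = G"

definition saturated_toric_arrangement :: "(complex^'n) set set \<Rightarrow> bool" where
  "saturated_toric_arrangement A \<longleftrightarrow> finite A \<and> (\<forall>K\<in>A. is_layer K) \<and>
     A = {connected_component_set (\<Inter>B) x | B x. B \<subseteq> A \<and> B \<noteq> {} \<and> x \<in> \<Inter>B}"

definition gen_cone :: "(int^'n) set \<Rightarrow> (real^'n) set" where
  "gen_cone S = {(\<Sum>u\<in>S. c u *\<^sub>R lat_to_real u) | c. \<forall>u\<in>S. c u \<ge> 0}"

definition smooth_cone :: "(real^'n) set \<Rightarrow> bool" where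
  "smooth_cone \<sigma> \<longleftrightarrow> (\<exists>B S. integral_basis UNIV B \<and> S \<subseteq> B \<and> \<sigma> = gen_cone S)"

definition fan :: "(real^'n) set set \<Rightarrow> bool" where
  "fan F \<longleftrightarrow> finite F \<and> F \<noteq> {} \<and>
     (\<forall>\<sigma>\<in>F. \<exists>S. finite S \<and> \<sigma> = gen_cone S) \<and>
     (\<forall>\<sigma>\<in>F. \<forall>\<tau>. \<tau> face_of \<sigma> \<and> \<tau> \<noteq> {} \<longrightarrow> \<tau> \<in> F) \<and>
     (\<forall>\<sigma>\<in>F. \<forall>\<tau>\<in>F. (\<sigma> \<inter> \<tau>) face_of \<sigma> \<and> (\<sigma> \<inter> \<tau>) face_of \<tau>) \<and>
     (\<forall>\<sigma>\<in>F. \<forall>v\<in>\<sigma>. - v \<in> \<sigma> \<longrightarrow> v = 0)"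

definition complete_fan :: "(real^'n) set set \<Rightarrow> bool" where
  "complete_fan F \<longleftrightarrow> \<Union>F = UNIV"

definition maximal_cone :: "(real^'n) set set \<Rightarrow> (real^'n) set \<Rightarrow> bool" where
  "maximal_cone F \<sigma> \<longleftrightarrow> \<sigma> \<in> F \<and> \<not> (\<exists>\<tau>\<in>F. \<sigma> \<subset> \<tau>)"

text \<open>Projectivity: existence of a strictly convex support function (Cox-Little-Schenck 7.2).\<close>
definition projective_fan :: "(real^'n) set set \<Rightarrow> bool" where
  "projective_fan F \<longleftrightarrow> (\<exists>h :: real^'n \<Rightarrow> real. \<forall>\<sigma>. maximal_cone F \<sigma> \<longrightarrow>
     (\<exists>m :: int^'n. (\<forall>v\<in>\<sigma>. pairing m v = h v) \<and> (\<forall>v. v \<notin> \<sigma> \<longrightarrow> pairing m v < h v)))"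

definition smooth_projective_fan :: "(real^'n) set set \<Rightarrow> bool" where
  "smooth_projective_fan F \<longleftrightarrow> fan F \<and> (\<forall>\<sigma>\<in>F. smooth_cone \<sigma>) \<and> complete_fan F \<and> projective_fan F"

definition refinement :: "(real^'n) set set \<Rightarrow> (real^'n) set set \<Rightarrow> bool" where
  "refinement G F \<longleftrightarrow> fan G \<and> (\<forall>\<tau>\<in>G. \<exists>\<sigma>\<in>F. \<tau> \<subseteq> \<sigma>) \<and>
     (\<forall>\<sigma>\<in>F. \<sigma> = \<Union>{\<tau>\<in>G. \<tau> \<subseteq> \<sigma>})"

definition equal_sign :: "(real^'n) set set \<Rightarrow> (int^'n) set \<Rightarrow> bool" where
  "equal_sign F X \<longleftrightarrow> (\<forall>chi\<in>X. \<forall>C\<in>F.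
     (\<forall>v\<in>C. pairing chi v \<ge> 0) \<or> (\<forall>v\<in>C. pairing chi v \<le> 0))"

definition compatible :: "(real^'n) set set \<Rightarrow> (complex^'n) set set \<Rightarrow> bool" where
  "compatible F A \<longleftrightarrow> (\<forall>G phi G' psi.
     split_summand G \<and> char_hom G phi \<and> split_summand G' \<and> char_hom G' psi \<and>
     layer G phi \<in> A \<and> layer G' psi \<in> A \<and> layer G phi \<subseteq> layer G' psi \<longrightarrow>
     (\<exists>B. integral_basis G B \<and> equal_sign F B \<and> integral_basis G' (B \<inter> G')))"

definition perp :: "(real^'n) set \<Rightarrow> (int^'n) set" where
  "perp \<sigma> = {m. \<forall>v\<in>\<sigma>. pairing m v = 0}"

definition dual_lat :: "(real^'n) set \<Rightarrow> (int^'n) set" where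
  "dual_lat \<sigma> = {m. \<forall>v\<in>\<sigma>. pairing m v \<ge> 0}"

type_synonym 'n toric_pt = "(real^'n) set \<times> (int^'n \<Rightarrow> complex)"

text \<open>A point of X_F is written as (tau, gamma): it lies in the orbit O(tau), and gamma is the
  group homomorphism perp(tau) -> C^* determining it, extended by 0 outside perp(tau).
  For a cone sigma containing tau, gamma restricted to dual(sigma) is the corresponding
  semigroup homomorphism, i.e. the point of the affine chart U_sigma.\<close>
definition toric_points :: "(real^'n) set set \<Rightarrow> 'n toric_pt set" where
  "toric_points F = {(\<tau>, \<gamma>). \<tau> \<in> F \<and> (\<forall>m. m \<notin> perp \<tau> \<longrightarrow> \<gamma> m = 0) \<and>
      (\<forall>m\<in>perp \<tau>. \<gamma> m \<noteq> 0) \<and> (\<forall>a\<in>perp \<tau>. \<forall>b\<in>perp \<tau>. \<gamma> (a + b) = \<gamma> a * \<gamma> b)}"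

definition toric_chart :: "(real^'n) set set \<Rightarrow> (real^'n) set \<Rightarrow> 'n toric_pt set" where
  "toric_chart F \<sigma> = {p \<in> toric_points F. fst p \<subseteq> \<sigma>}"

text \<open>Analytic topology on U_sigma: induced by the coordinate functions chi^m, m in dual(sigma).\<close>
definition chart_topology :: "(real^'n) set set \<Rightarrow> (real^'n) set \<Rightarrow> 'n toric_pt topology" where
  "chart_topology F \<sigma> = pullback_topology (toric_chart F \<sigma>)
      (\<lambda>p. restrict (snd p) (dual_lat \<sigma>)) (product_topology (\<lambda>_. euclidean) (dual_lat \<sigma>))"

definition toric_topology :: "(real^'n) set set \<Rightarrow> 'n toric_pt topology" where
  "toric_topology F = topology (\<lambda>U. U \<subseteq> toric_points F \<and>
      (\<forall>\<sigma>\<in>F. openin (chart_topology F \<sigma>) (U \<inter> toric_chart F \<sigma>)))"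

text \<open>Embedding of the torus T as the open orbit O({0}).\<close>
definition torus_emb :: "complex^'n \<Rightarrow> 'n toric_pt" where
  "torus_emb t = ({0}, \<lambda>m. char_val m t)"

text \<open>The toric morphism X_G -> X_F induced by the identity of N (G refining F): a point of
  orbit O(tau) maps to the orbit O(sigma), sigma the smallest cone of F containing tau,
  by restricting the semigroup homomorphism.\<close>
definition min_cone :: "(real^'n) set set \<Rightarrow> (real^'n) set \<Rightarrow> (real^'n) set" where
  "min_cone F \<tau> = \<Inter>{\<sigma>\<in>F. \<tau> \<subseteq> \<sigma>}"

definition toric_refinement_map ::
    "(real^'n) set set \<Rightarrow> 'n toric_pt \<Rightarrow> 'n toric_pt" where
  "toric_refinement_map F p =
     (let \<sigma> = min_cone F (fst p) in (\<sigma>, \<lambda>m. if m \<in> perp \<sigma> then snd p m else 0))"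

end

theory Submission
  imports Defs
begin

text \<open>Write K = K_{\<Gamma>,\<phi>} and fix an integral basis B of \<Gamma> of equal sign with respect
  to F, hence also with respect to every refinement G. For a smooth fan H on which B has equal
  sign, the closure of K in X_H is the union, over the cones \<tau> of H with \<Gamma> \<subseteq> \<tau>^\<bottom>, of
  the points of the orbit O(\<tau>) whose coordinates agree with \<phi> on \<Gamma>. This set is closed
  because on each chart U_\<sigma> it is cut out by the equations \<chi>^b = \<phi>(b) or
  \<chi>^(-b) = \<phi>(-b), b \<in> B, whichever is a regular function there; it lies in the closure
  because by smoothness every orbit point is a limit of torus points with the same values on
  \<tau>^\<bottom>. The refinement map sends O(\<tau>) to O(\<sigma>), \<sigma> the smallest cone of F containing
  \<tau>; since the kernel of each b \<in> B meets every cone of F in a face, \<Gamma> \<subseteq> \<tau>^\<bottom> forces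
  \<Gamma> \<subseteq> \<sigma>^\<bottom>, so both sides of the claimed identity are given by the same equations.\<close>

section \<open>Characters on lattice subgroups\<close>

lemma lattice_subgroup_of_nat_smult:
  assumes "lattice_subgroup H" "a \<in> H" shows "int n *s a \<in> H"
proof (induction n)
  case 0
  then show ?case using assms(1) unfolding lattice_subgroup_def by (simp add: vec_eq_iff)
next
  case (Suc n)
  have "int (Suc n) *s a = a + int n *s a" by (simp add: vec_eq_iff algebra_simps)
  then show ?case using Suc assms unfolding lattice_subgroup_def by simp
qed

lemma lattice_subgroup_uminus_iff: "lattice_subgroup H \<Longrightarrow> - a \<in> H \<longleftrightarrow> a \<in> H"
  unfolding lattice_subgroup_def by (metis minus_minus)

lemma lattice_subgroup_smult:
  assumes "lattice_subgroup H" "a \<in> H" shows "c *s a \<in> H"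
proof (cases "c \<ge> 0")
  case True
  then obtain n where "c = int n" using nonneg_int_cases by blast
  then show ?thesis using lattice_subgroup_of_nat_smult[OF assms] by simp
next
  case False
  then have "c *s a = - (int (nat (- c)) *s a)" by (simp add: vec_eq_iff)
  moreover have "int (nat (- c)) *s a \<in> H" by (rule lattice_subgroup_of_nat_smult[OF assms])
  ultimately show ?thesis using assms(1) unfolding lattice_subgroup_def by simp
qed

lemma lattice_subgroup_sum:
  assumes "lattice_subgroup H" "\<forall>i\<in>I. f i \<in> H" shows "sum f I \<in> H"
  using assms(2)
proof (induction I rule: infinite_finite_induct)
  case (insert i I)
  then show ?case using assms(1) unfolding lattice_subgroup_def by simp
qed (use assms(1) in \<open>simp_all add: lattice_subgroup_def\<close>)

lemma int_span_subset:
  assumes "lattice_subgroup H" "B \<subseteq> H" shows "int_span B \<subseteq> H"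
proof
  fix x assume "x \<in> int_span B"
  then obtain c where "x = (\<Sum>b\<in>B. c b *s b)" unfolding int_span_def by blast
  then show "x \<in> H" using assms by (auto intro!: lattice_subgroup_sum lattice_subgroup_smult)
qed

lemma char_hom_zero:
  assumes "lattice_subgroup H" "char_hom H h" shows "h 0 = 1"
proof -
  have "0 \<in> H" using assms(1) unfolding lattice_subgroup_def by simp
  then have "h (0 + 0) = h 0 * h 0" "h 0 \<noteq> 0" using assms(2) unfolding char_hom_def by blast+
  then show ?thesis by simp
qed

lemma char_hom_uminus:
  assumes "lattice_subgroup H" "char_hom H h" "a \<in> H" shows "h (- a) = inverse (h a)"
proof -
  have "- a \<in> H" using assms(1,3) unfolding lattice_subgroup_def by simp
  then have "h (a + - a) = h a * h (- a)" "h a \<noteq> 0" using assms(2,3) unfolding char_hom_def by blast+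
  then show ?thesis using char_hom_zero[OF assms(1,2)] by (simp add: field_simps)
qed

lemma char_hom_of_nat_smult:
  assumes "lattice_subgroup H" "char_hom H h" "a \<in> H" shows "h (int n *s a) = h a ^ n"
proof (induction n)
  case 0
  then show ?case using char_hom_zero[OF assms(1,2)] by (simp add: vec_eq_iff)
next
  case (Suc n)
  have "int (Suc n) *s a = a + int n *s a" by (simp add: vec_eq_iff algebra_simps)
  then show ?case using Suc assms lattice_subgroup_of_nat_smult[OF assms(1,3), of n]
    unfolding char_hom_def by simp
qed

lemma char_hom_smult:
  assumes "lattice_subgroup H" "char_hom H h" "a \<in> H" shows "h (c *s a) = h a powi c"
proof (cases "c \<ge> 0")
  case True
  then obtain n where "c = int n" using nonneg_int_cases by blast
  then show ?thesis using char_hom_of_nat_smult[OF assms] by simp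
next
  case False
  define n where "n = nat (- c)"
  have "c *s a = - (int n *s a)" "c = - int n" using False unfolding n_def by (simp_all add: vec_eq_iff)
  then show ?thesis
    using char_hom_uminus[OF assms(1,2) lattice_subgroup_of_nat_smult[OF assms(1,3)]]
      char_hom_of_nat_smult[OF assms] by (simp add: power_int_minus)
qed

lemma char_hom_sum:
  assumes "lattice_subgroup H" "char_hom H h" "\<forall>i\<in>I. f i \<in> H"
  shows "h (sum f I) = (\<Prod>i\<in>I. h (f i))"
  using assms(3)
proof (induction I rule: infinite_finite_induct)
  case (insert x I)
  then show ?case using assms(1,2) lattice_subgroup_sum[OF assms(1), of I f] unfolding char_hom_def by simp
qed (simp_all add: char_hom_zero[OF assms(1,2)])

lemma char_hom_eq_on_integral_basis:
  assumes "lattice_subgroup \<Gamma>" "integral_basis \<Gamma> B" "lattice_subgroup P" "\<Gamma> \<subseteq> P"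
    and "char_hom P g" "char_hom \<Gamma> f" "\<forall>b\<in>B. g b = f b" "chi \<in> \<Gamma>"
  shows "g chi = f chi"
proof -
  obtain c where c: "chi = (\<Sum>b\<in>B. c b *s b)"
    using assms(2,8) unfolding integral_basis_def int_span_def by blast
  have B: "B \<subseteq> \<Gamma>" using assms(2) unfolding integral_basis_def by blast
  have cB: "\<forall>b\<in>B. c b *s b \<in> \<Gamma>" using B lattice_subgroup_smult[OF assms(1)] by blast
  have "g chi = (\<Prod>b\<in>B. g (c b *s b))"
    unfolding c by (rule char_hom_sum[OF assms(3,5)]) (use cB assms(4) in blast)
  also have "\<dots> = (\<Prod>b\<in>B. f (c b *s b))"
  proof (rule prod.cong[OF refl])
    fix b assume "b \<in> B"
    then have "b \<in> \<Gamma>" "b \<in> P" "g b = f b" using B assms(4,7) by auto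
    then show "g (c b *s b) = f (c b *s b)"
      using char_hom_smult[OF assms(3,5)] char_hom_smult[OF assms(1,6)] by simp
  qed
  also have "\<dots> = f chi"
    unfolding c by (rule char_hom_sum[OF assms(1,6) cB, symmetric])
  finally show ?thesis .
qed

definition lat_inner :: "int^'n \<Rightarrow> int^'n \<Rightarrow> int" where
  "lat_inner m u = (\<Sum>i\<in>UNIV. m$i * u$i)"

lemma pairing_eq_inner: "pairing m v = lat_to_real m \<bullet> v"
  unfolding pairing_def lat_to_real_def inner_vec_def by simp

lemma pairing_lat_to_real: "pairing m (lat_to_real u) = of_int (lat_inner m u)"
  unfolding pairing_def lat_to_real_def lat_inner_def by simp

lemma lat_to_real_add: "lat_to_real (a + b) = lat_to_real a + lat_to_real b"
  unfolding lat_to_real_def by (simp add: vec_eq_iff)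

lemma lat_to_real_uminus: "lat_to_real (- a) = - lat_to_real a"
  unfolding lat_to_real_def by (simp add: vec_eq_iff)

lemma lat_to_real_smult: "lat_to_real (c *s a) = of_int c *\<^sub>R lat_to_real a"
  unfolding lat_to_real_def by (simp add: vec_eq_iff)

lemma lat_to_real_sum: "lat_to_real (sum f I) = (\<Sum>i\<in>I. lat_to_real (f i))"
  by (induction I rule: infinite_finite_induct) (auto simp: lat_to_real_add lat_to_real_def vec_eq_iff)

lemma pairing_zero: "pairing 0 v = 0"
  by (simp add: pairing_def)

lemma pairing_add: "pairing (a + b) v = pairing a v + pairing b v"
  by (simp add: pairing_eq_inner lat_to_real_add inner_add_left)

lemma pairing_uminus: "pairing (- a) v = - pairing a v"
  by (simp add: pairing_eq_inner lat_to_real_uminus)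

lemma pairing_int_combination:
  "pairing (\<Sum>b\<in>B. c b *s b) v = (\<Sum>b\<in>B. of_int (c b) * pairing b v)"
  by (simp add: pairing_eq_inner lat_to_real_sum lat_to_real_smult inner_sum_left)

lemma pairing_cone_combination:
  "finite S \<Longrightarrow> pairing m (\<Sum>u\<in>S. c u *\<^sub>R lat_to_real u) = (\<Sum>u\<in>S. c u * of_int (lat_inner m u))"
  by (simp add: pairing_eq_inner inner_sum_right pairing_lat_to_real[unfolded pairing_eq_inner])

lemma pairing_integral_basis_eq_0:
  assumes "integral_basis \<Gamma> B" "\<forall>b\<in>B. pairing b v = 0" "chi \<in> \<Gamma>"
  shows "pairing chi v = 0"
proof -
  obtain c where "chi = (\<Sum>b\<in>B. c b *s b)"
    using assms(1,3) unfolding integral_basis_def int_span_def by blast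
  then show ?thesis using assms(2) by (simp add: pairing_int_combination)
qed

lemma perp_lattice_subgroup: "lattice_subgroup (perp \<tau>)"
  unfolding lattice_subgroup_def perp_def by (simp add: pairing_zero pairing_add pairing_uminus)

lemma perp_singleton_zero: "perp {0} = UNIV"
  unfolding perp_def by (simp add: pairing_eq_inner)

lemma perp_antimono: "\<sigma> \<subseteq> \<tau> \<Longrightarrow> perp \<tau> \<subseteq> perp \<sigma>"
  unfolding perp_def by blast

lemma integral_basis_unit_coordinates:
  assumes "integral_basis UNIV (B :: (int^'n) set)"
  obtains c where "\<And>i j. (\<Sum>u\<in>B. c j u * u$i) = (if i = j then 1 else 0)"
proof -
  have "\<forall>i. \<exists>c. axis i 1 = (\<Sum>b\<in>B. c b *s b)"
    using assms unfolding integral_basis_def int_span_def by blast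
  then obtain c where c: "\<And>j. axis j 1 = (\<Sum>b\<in>B. c j b *s b)" by metis
  have "(\<Sum>u\<in>B. c j u * u$i) = (if i = j then 1 else 0)" for i j
  proof -
    have "(axis j 1 :: int^'n)$i = (\<Sum>u\<in>B. c j u * u$i)" by (subst c) (simp add: sum_component)
    then show ?thesis by (simp add: axis_def)
  qed
  then show ?thesis using that by blast
qed

lemma integral_basis_dual:
  assumes "integral_basis UNIV (B :: (int^'n) set)"
  obtains md where "\<And>u u'. u \<in> B \<Longrightarrow> u' \<in> B \<Longrightarrow> lat_inner (md u) u' = (if u = u' then 1 else 0)"
    and "\<And>x. x = (\<Sum>u\<in>B. lat_inner x u *s md u)"
proof -
  have fin: "finite B" and indep: "\<And>d. (\<Sum>b\<in>B. d b *s b) = 0 \<Longrightarrow> \<forall>b\<in>B. d b = 0"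
    using assms unfolding integral_basis_def by auto
  obtain c where c: "\<And>i j. (\<Sum>u\<in>B. c j u * u$i) = (if i = j then 1 else 0)"
    using integral_basis_unit_coordinates[OF assms] by blast
  have expand: "(\<Sum>u\<in>B. (\<Sum>i\<in>UNIV. x$i * c i u) * u$j) = x$j" for x :: "int^'n" and j
  proof -
    have "(\<Sum>u\<in>B. (\<Sum>i\<in>UNIV. x$i * c i u) * u$j) = (\<Sum>u\<in>B. \<Sum>i\<in>UNIV. x$i * (c i u * u$j))"
      by (simp add: sum_distrib_right mult.assoc)
    also have "\<dots> = (\<Sum>i\<in>UNIV. x$i * (\<Sum>u\<in>B. c i u * u$j))"
      by (subst sum.swap) (simp add: sum_distrib_left)
    also have "\<dots> = x$j" by (simp add: c if_distrib[of "\<lambda>z. _ * z"] cong: if_cong)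
    finally show ?thesis .
  qed
  define md where "md u = (\<chi> i. c i u)" for u
  have "(\<Sum>u\<in>B. lat_inner x u *s md u)$j = x$j" for x j
  proof -
    have "(\<Sum>u\<in>B. lat_inner x u *s md u)$j = (\<Sum>u\<in>B. \<Sum>i\<in>UNIV. x$i * (c j u * u$i))"
      by (simp add: sum_component md_def lat_inner_def sum_distrib_left mult_ac)
    also have "\<dots> = (\<Sum>i\<in>UNIV. x$i * (\<Sum>u\<in>B. c j u * u$i))"
      by (subst sum.swap) (simp add: sum_distrib_left)
    also have "\<dots> = x$j" by (simp add: c if_distrib[of "\<lambda>z. _ * z"] cong: if_cong)
    finally show ?thesis .
  qed
  then have "x = (\<Sum>u\<in>B. lat_inner x u *s md u)" for x by (simp add: vec_eq_iff)
  moreover have "lat_inner (md u) u' = (if u = u' then 1 else 0)" if "u \<in> B" "u' \<in> B" for u u'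
  proof -
    define d where "d v = (\<Sum>i\<in>UNIV. u'$i * c i v) - (if v = u' then 1 else 0)" for v
    have "(\<Sum>v\<in>B. d v *s v)$j = 0" for j
      using expand[of u' j] \<open>u' \<in> B\<close> fin
      by (simp add: sum_component d_def left_diff_distrib sum_subtractf
          if_distrib[of "\<lambda>z. z * _"] cong: if_cong)
    then have "(\<Sum>v\<in>B. d v *s v) = 0" by (simp add: vec_eq_iff)
    then have "d u = 0" using indep \<open>u \<in> B\<close> by blast
    then show ?thesis unfolding d_def lat_inner_def md_def by (simp add: mult.commute)
  qed
  ultimately show ?thesis using that by blast
qed

section \<open>Cones and fans\<close>

lemma zero_in_gen_cone: "0 \<in> gen_cone S"
  unfolding gen_cone_def by (rule CollectI, rule exI[of _ "\<lambda>_. 0"]) simp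

lemma lat_to_real_in_gen_cone: "finite S \<Longrightarrow> u \<in> S \<Longrightarrow> lat_to_real u \<in> gen_cone S"
  unfolding gen_cone_def
  by (rule CollectI, rule exI[of _ "\<lambda>u'. if u' = u then 1 else 0"])
    (simp add: if_distrib[of "\<lambda>z. z *\<^sub>R _"] cong: if_cong)

lemma gen_cone_scaleR:
  assumes "x \<in> gen_cone S" "a \<ge> 0" shows "a *\<^sub>R x \<in> gen_cone S"
proof -
  obtain c where c: "x = (\<Sum>u\<in>S. c u *\<^sub>R lat_to_real u)" "\<forall>u\<in>S. c u \<ge> 0"
    using assms(1) unfolding gen_cone_def by blast
  then have "a *\<^sub>R x = (\<Sum>u\<in>S. (a * c u) *\<^sub>R lat_to_real u)" by (simp add: scaleR_sum_right)
  then show ?thesis unfolding gen_cone_def using c(2) assms(2) by fastforce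
qed

lemma perp_gen_cone_iff:
  assumes "finite S" shows "m \<in> perp (gen_cone S) \<longleftrightarrow> (\<forall>u\<in>S. lat_inner m u = 0)"
proof
  show "m \<in> perp (gen_cone S) \<Longrightarrow> \<forall>u\<in>S. lat_inner m u = 0"
    using lat_to_real_in_gen_cone[OF assms] pairing_lat_to_real[of m] unfolding perp_def by fastforce
  show "\<forall>u\<in>S. lat_inner m u = 0 \<Longrightarrow> m \<in> perp (gen_cone S)"
    using assms by (auto simp: perp_def gen_cone_def pairing_cone_combination)
qed

lemma dual_lat_gen_cone_nonneg:
  "finite S \<Longrightarrow> m \<in> dual_lat (gen_cone S) \<Longrightarrow> u \<in> S \<Longrightarrow> lat_inner m u \<ge> 0"
  using lat_to_real_in_gen_cone[of S u] by (auto simp: dual_lat_def pairing_lat_to_real)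

lemma fan_cone_gen_cone:
  assumes "fan F" "\<sigma> \<in> F" shows "\<exists>S. finite S \<and> \<sigma> = gen_cone S"
proof -
  have "\<forall>\<sigma>\<in>F. \<exists>S. finite S \<and> \<sigma> = gen_cone S" using assms(1) unfolding fan_def by (elim conjE)
  then show ?thesis using assms(2) by blast
qed

lemma fan_inter_face_of:
  assumes "fan F" "\<sigma> \<in> F" "\<tau> \<in> F" shows "(\<sigma> \<inter> \<tau>) face_of \<sigma>"
proof -
  have "\<forall>\<sigma>\<in>F. \<forall>\<tau>\<in>F. (\<sigma> \<inter> \<tau>) face_of \<sigma> \<and> (\<sigma> \<inter> \<tau>) face_of \<tau>"
    using assms(1) unfolding fan_def by (elim conjE)
  then show ?thesis using assms(2,3) by blast
qed

lemma fan_cone_pointed: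
  assumes "fan F" "\<sigma> \<in> F" "v \<in> \<sigma>" "- v \<in> \<sigma>" shows "v = 0"
proof -
  have "\<forall>\<sigma>\<in>F. \<forall>v\<in>\<sigma>. - v \<in> \<sigma> \<longrightarrow> v = 0" using assms(1) unfolding fan_def by (elim conjE)
  then show ?thesis using assms(2-4) by blast
qed

lemma fan_zero_in_cone: "fan F \<Longrightarrow> \<sigma> \<in> F \<Longrightarrow> 0 \<in> \<sigma>"
  using fan_cone_gen_cone zero_in_gen_cone by blast

lemma fan_cone_scaleR: "fan F \<Longrightarrow> \<sigma> \<in> F \<Longrightarrow> x \<in> \<sigma> \<Longrightarrow> a \<ge> 0 \<Longrightarrow> a *\<^sub>R x \<in> \<sigma>"
  using fan_cone_gen_cone gen_cone_scaleR by blast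

lemma fan_cone_convex: "fan F \<Longrightarrow> \<sigma> \<in> F \<Longrightarrow> convex \<sigma>"
  using fan_inter_face_of[of F \<sigma> \<sigma>] face_of_imp_convex by simp

lemma fan_face_closed:
  assumes "fan F" "\<sigma> \<in> F" "\<tau> face_of \<sigma>" "0 \<in> \<tau>" shows "\<tau> \<in> F"
proof -
  have "\<forall>\<sigma>\<in>F. \<forall>\<tau>. \<tau> face_of \<sigma> \<and> \<tau> \<noteq> {} \<longrightarrow> \<tau> \<in> F"
    using assms(1) unfolding fan_def by (elim conjE)
  then show ?thesis using assms(2-4) by blast
qed

lemma fan_zero_cone: assumes "fan F" shows "{0} \<in> F"
proof -
  have "F \<noteq> {}" using assms unfolding fan_def by (elim conjE)
  then obtain \<sigma> where \<sigma>: "\<sigma> \<in> F" by blast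
  have "{0} face_of \<sigma>"
    unfolding face_of_def
  proof (intro conjI ballI impI)
    show "{0} \<subseteq> \<sigma>" using fan_zero_in_cone[OF assms \<sigma>] by simp
    fix a b x assume a: "a \<in> \<sigma>" and b: "b \<in> \<sigma>" and x: "x \<in> {0}" "x \<in> open_segment a b"
    then obtain u where u: "0 < u" "u < 1" "0 = (1 - u) *\<^sub>R a + u *\<^sub>R b" unfolding in_segment by auto
    text \<open>0 in the open segment makes -b a nonnegative multiple of a; the cone is pointed.\<close>
    then have "(1 - u) *\<^sub>R a = - (u *\<^sub>R b)" by (simp add: eq_neg_iff_add_eq_0)
    then have "u *\<^sub>R (- b) = (1 - u) *\<^sub>R a" by simp
    then have "(1 / u) *\<^sub>R (u *\<^sub>R (- b)) = ((1 - u) / u) *\<^sub>R a" by simp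
    then have "- b = ((1 - u) / u) *\<^sub>R a" using u(1) by simp
    then have "- b \<in> \<sigma>" using fan_cone_scaleR[OF assms \<sigma> a, of "(1 - u) / u"] u by simp
    then have "b = 0" using fan_cone_pointed[OF assms \<sigma> b] by simp
    moreover have "a = 0" using u \<open>b = 0\<close> by simp
    ultimately show "a \<in> {0}" "b \<in> {0}" by simp_all
  qed simp
  then show ?thesis using fan_face_closed[OF assms \<sigma>] by blast
qed

lemma fan_Inter_mem:
  assumes "fan F" "finite C" "C \<noteq> {}" "C \<subseteq> F" shows "\<Inter>C \<in> F"
  using assms(2-4)
proof (induction C rule: finite_ne_induct)
  case (insert \<sigma> C)
  then have "\<Inter>C \<in> F" "\<sigma> \<in> F" by auto
  then have "(\<sigma> \<inter> \<Inter>C) face_of \<sigma>" "0 \<in> \<sigma> \<inter> \<Inter>C"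
    using fan_inter_face_of[OF assms(1)] fan_zero_in_cone[OF assms(1)] by blast+
  then show ?case using fan_face_closed[OF assms(1) \<open>\<sigma> \<in> F\<close>] by simp
qed simp

lemma min_cone_mem:
  assumes "fan F" "refinement G F" "\<rho> \<in> G" shows "min_cone F \<rho> \<in> F"
proof -
  have "{\<sigma>\<in>F. \<rho> \<subseteq> \<sigma>} \<noteq> {}" using assms(2,3) unfolding refinement_def by blast
  moreover have "finite {\<sigma>\<in>F. \<rho> \<subseteq> \<sigma>}" using assms(1) unfolding fan_def by (elim conjE) simp
  ultimately show ?thesis unfolding min_cone_def by (intro fan_Inter_mem[OF assms(1)]) auto
qed

lemma subset_min_cone: "\<rho> \<subseteq> min_cone F \<rho>"
  unfolding min_cone_def by blast

lemma fan_supporting_kernel_mem: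
  assumes "fan F" "\<sigma> \<in> F" "(\<forall>v\<in>\<sigma>. pairing b v \<ge> 0) \<or> (\<forall>v\<in>\<sigma>. pairing b v \<le> 0)"
  shows "{v\<in>\<sigma>. pairing b v = 0} \<in> F"
proof -
  have "convex \<sigma>" using fan_cone_convex[OF assms(1,2)] .
  then have "(\<sigma> \<inter> {x. lat_to_real b \<bullet> x = 0}) face_of \<sigma>"
    using assms(3) face_of_Int_supporting_hyperplane_le[where a="lat_to_real b" and b=0]
      face_of_Int_supporting_hyperplane_ge[where a="lat_to_real b" and b=0]
    unfolding pairing_eq_inner by blast
  moreover have "{v\<in>\<sigma>. pairing b v = 0} = \<sigma> \<inter> {x. lat_to_real b \<bullet> x = 0}"
    unfolding pairing_eq_inner by auto
  ultimately show ?thesis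
    using fan_face_closed[OF assms(1,2)] fan_zero_in_cone[OF assms(1,2)] by simp
qed

text \<open>The kernel of an equal-sign character cuts a cone of F in a face, hence in a cone of F;
  minimality of the smallest cone containing \<rho> then forces it into the kernel.\<close>
lemma min_cone_orthogonal:
  assumes "fan F" "refinement G F" "\<rho> \<in> G" "equal_sign F B" "b \<in> B"
    and "\<forall>v\<in>\<rho>. pairing b v = 0" "v \<in> min_cone F \<rho>"
  shows "pairing b v = 0"
proof -
  let ?\<sigma> = "min_cone F \<rho>"
  have "{w\<in>?\<sigma>. pairing b w = 0} \<in> F"
    using fan_supporting_kernel_mem[OF assms(1) min_cone_mem[OF assms(1-3)]] assms(4,5)
      min_cone_mem[OF assms(1-3)] unfolding equal_sign_def by blast
  moreover have "\<rho> \<subseteq> {w\<in>?\<sigma>. pairing b w = 0}" using subset_min_cone assms(6) by blast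
  ultimately have "?\<sigma> \<subseteq> {w\<in>?\<sigma>. pairing b w = 0}" unfolding min_cone_def by blast
  then show ?thesis using assms(7) by blast
qed

section \<open>The analytic topology of X_H\<close>

lemma istopology_toric:
  "istopology (\<lambda>U. U \<subseteq> toric_points F \<and> (\<forall>\<sigma>\<in>F. openin (chart_topology F \<sigma>) (U \<inter> toric_chart F \<sigma>)))"
proof -
  have inter: "S \<inter> T \<subseteq> toric_points F \<and> (\<forall>\<sigma>\<in>F. openin (chart_topology F \<sigma>) (S \<inter> T \<inter> toric_chart F \<sigma>))"
    if S: "S \<subseteq> toric_points F \<and> (\<forall>\<sigma>\<in>F. openin (chart_topology F \<sigma>) (S \<inter> toric_chart F \<sigma>))"
    and T: "T \<subseteq> toric_points F \<and> (\<forall>\<sigma>\<in>F. openin (chart_topology F \<sigma>) (T \<inter> toric_chart F \<sigma>))" for S T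
  proof -
    have "S \<inter> T \<inter> toric_chart F \<sigma> = (S \<inter> toric_chart F \<sigma>) \<inter> (T \<inter> toric_chart F \<sigma>)" for \<sigma> by blast
    then show ?thesis using S T by (auto intro: openin_Int)
  qed
  have union: "\<Union>K \<subseteq> toric_points F \<and> (\<forall>\<sigma>\<in>F. openin (chart_topology F \<sigma>) (\<Union>K \<inter> toric_chart F \<sigma>))"
    if K: "\<forall>U\<in>K. U \<subseteq> toric_points F \<and> (\<forall>\<sigma>\<in>F. openin (chart_topology F \<sigma>) (U \<inter> toric_chart F \<sigma>))" for K
  proof -
    have e: "\<Union>K \<inter> toric_chart F \<sigma> = \<Union>((\<lambda>U. U \<inter> toric_chart F \<sigma>) ` K)" for \<sigma> by blast
    have "openin (chart_topology F \<sigma>) (\<Union>K \<inter> toric_chart F \<sigma>)" if "\<sigma> \<in> F" for \<sigma>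
      unfolding e by (rule openin_Union) (use K that in blast)
    then show ?thesis using K by blast
  qed
  show ?thesis unfolding istopology_def using inter union by blast
qed

lemma openin_toric_topology:
  "openin (toric_topology F) U \<longleftrightarrow>
     U \<subseteq> toric_points F \<and> (\<forall>\<sigma>\<in>F. openin (chart_topology F \<sigma>) (U \<inter> toric_chart F \<sigma>))"
  unfolding toric_topology_def topology_inverse'[OF istopology_toric] ..

lemma topspace_chart_topology: "topspace (chart_topology F \<sigma>) = toric_chart F \<sigma>"
  unfolding chart_topology_def topspace_pullback_topology by auto

lemma toric_chart_subset: "toric_chart F \<sigma> \<subseteq> toric_points F"
  unfolding toric_chart_def by auto

lemma topspace_toric_topology: "topspace (toric_topology F) = toric_points F"
proof -
  have "toric_points F \<inter> toric_chart F \<sigma> = topspace (chart_topology F \<sigma>)" for \<sigma>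
    using toric_chart_subset[of F \<sigma>] unfolding topspace_chart_topology by blast
  then have "openin (toric_topology F) (toric_points F)" unfolding openin_toric_topology by simp
  then have "toric_points F \<subseteq> topspace (toric_topology F)" by (rule openin_subset)
  moreover have "topspace (toric_topology F) \<subseteq> toric_points F"
    using openin_topspace[of "toric_topology F"] unfolding openin_toric_topology by blast
  ultimately show ?thesis by blast
qed

lemma closedin_toric_topology:
  assumes "Z \<subseteq> toric_points F" "\<And>\<sigma>. \<sigma> \<in> F \<Longrightarrow> closedin (chart_topology F \<sigma>) (Z \<inter> toric_chart F \<sigma>)"
  shows "closedin (toric_topology F) Z"
proof -
  have "(toric_points F - Z) \<inter> toric_chart F \<sigma> = topspace (chart_topology F \<sigma>) - (Z \<inter> toric_chart F \<sigma>)" for \<sigma>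
    using toric_chart_subset[of F \<sigma>] unfolding topspace_chart_topology by blast
  moreover have "openin (chart_topology F \<sigma>) (topspace (chart_topology F \<sigma>) - (Z \<inter> toric_chart F \<sigma>))"
    if "\<sigma> \<in> F" for \<sigma>
    using assms(2)[OF that] unfolding closedin_def by (elim conjE)
  ultimately have "openin (toric_topology F) (toric_points F - Z)"
    unfolding openin_toric_topology by simp
  then show ?thesis unfolding closedin_def topspace_toric_topology using assms(1) by blast
qed

lemma continuous_map_chart_coordinate:
  assumes "m \<in> dual_lat \<sigma>" shows "continuous_map (chart_topology F \<sigma>) euclidean (\<lambda>p. snd p m)"
proof -
  have cont: "continuous_map (chart_topology F \<sigma>) euclidean
      ((\<lambda>x. x m) \<circ> (\<lambda>p. restrict (snd p) (dual_lat \<sigma>)))"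
    unfolding chart_topology_def
    by (rule continuous_map_pullback) (rule continuous_map_product_projection[OF assms])
  have coord: "(\<lambda>x. x m) \<circ> (\<lambda>p. restrict (snd p) (dual_lat \<sigma>)) = (\<lambda>p. snd p m)"
    using assms by (auto simp: fun_eq_iff)
  show ?thesis using cont unfolding coord .
qed

lemma closedin_chart_coordinate_eq:
  assumes "m \<in> dual_lat \<sigma>"
  shows "closedin (chart_topology F \<sigma>) {p \<in> toric_chart F \<sigma>. snd p m = c}"
  using closedin_continuous_map_preimage[OF continuous_map_chart_coordinate[OF assms]
      closed_singleton[of c, unfolded closed_closedin]]
  by (simp add: topspace_chart_topology)

lemma closedin_chart_coordinate_equations:
  assumes "finite B" "\<forall>b\<in>B. s b \<in> dual_lat \<sigma>"
  shows "closedin (chart_topology F \<sigma>) {p \<in> toric_chart F \<sigma>. \<forall>b\<in>B. snd p (s b) = c b}"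
proof -
  have "{p \<in> toric_chart F \<sigma>. \<forall>b\<in>B. snd p (s b) = c b} =
      \<Inter>(insert (toric_chart F \<sigma>) ((\<lambda>b. {p \<in> toric_chart F \<sigma>. snd p (s b) = c b}) ` B))" by auto
  moreover have "closedin (chart_topology F \<sigma>) \<dots>"
    by (rule closedin_Inter) (auto intro: closedin_chart_coordinate_eq assms(2)[rule_format]
        closedin_topspace[of "chart_topology F \<sigma>", unfolded topspace_chart_topology])
  ultimately show ?thesis by simp
qed

lemma in_closure_of_toric_if_chart_limit:
  assumes "\<rho> \<in> F" "p \<in> toric_chart F \<rho>" "\<And>k. q k \<in> toric_chart F \<rho> \<inter> S"
    and "\<And>m. m \<in> dual_lat \<rho> \<Longrightarrow> ((\<lambda>k. snd (q k) m) \<longlongrightarrow> snd p m) sequentially"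
  shows "p \<in> (toric_topology F) closure_of S"
  unfolding in_closure_of
proof (intro conjI allI impI)
  show "p \<in> topspace (toric_topology F)"
    using assms(2) toric_chart_subset topspace_toric_topology by blast
  define f where "f q = restrict (snd q) (dual_lat \<rho>)" for q :: "'a toric_pt"
  have lim: "limitin (product_topology (\<lambda>_. euclidean) (dual_lat \<rho>)) (\<lambda>k. f (q k)) (f p) sequentially"
    unfolding limitin_componentwise f_def using assms(4) by simp
  fix T assume T: "p \<in> T \<and> openin (toric_topology F) T"
  then have "openin (chart_topology F \<rho>) (T \<inter> toric_chart F \<rho>)"
    using assms(1) unfolding openin_toric_topology by blast
  then obtain U where U: "openin (product_topology (\<lambda>_. euclidean) (dual_lat \<rho>)) U"
      "T \<inter> toric_chart F \<rho> = f -` U \<inter> toric_chart F \<rho>"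
    unfolding chart_topology_def openin_pullback_topology f_def by blast
  have "f p \<in> U" using T assms(2) U(2) by blast
  then obtain N where "f (q N) \<in> U"
    using limitinD[OF lim U(1)] unfolding eventually_sequentially by blast
  then show "\<exists>y. y \<in> S \<and> y \<in> T" using U(2) assms(3)[of N] by blast
qed

section \<open>Orbit points as limits of torus points\<close>

lemma toric_pointsD:
  assumes "p \<in> toric_points H"
  shows "fst p \<in> H" "char_hom (perp (fst p)) (snd p)" "\<And>m. m \<notin> perp (fst p) \<Longrightarrow> snd p m = 0"
  using assms unfolding toric_points_def char_hom_def by auto

lemma char_val_nonzero: "t \<in> torus \<Longrightarrow> char_val m t \<noteq> 0"
  unfolding char_val_def torus_def by (simp add: power_int_not_zero)

lemma char_val_add: "t \<in> torus \<Longrightarrow> char_val (a + b) t = char_val a t * char_val b t"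
  unfolding char_val_def torus_def by (simp add: power_int_add prod.distrib)

lemma torus_emb_in_toric_points:
  assumes "fan H" "t \<in> torus" shows "torus_emb t \<in> toric_points H"
  unfolding toric_points_def torus_emb_def
  using fan_zero_cone[OF assms(1)] perp_singleton_zero char_val_nonzero[OF assms(2)]
    char_val_add[OF assms(2)] by auto

lemma torus_emb_in_toric_chart:
  assumes "fan H" "\<sigma> \<in> H" "t \<in> torus" shows "torus_emb t \<in> toric_chart H \<sigma>"
  unfolding toric_chart_def
  using torus_emb_in_toric_points[OF assms(1,3)] fan_zero_in_cone[OF assms(1,2)]
  by (simp add: torus_emb_def)

lemma prod_power_int_distrib: "(\<Prod>u\<in>B. a u :: 'a :: field) powi k = (\<Prod>u\<in>B. a u powi k)"
  by (induction B rule: infinite_finite_induct) (auto simp: power_int_mult_distrib)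

lemma prod_power_int_add: "(a :: 'a :: field) \<noteq> 0 \<Longrightarrow> (\<Prod>i\<in>I. a powi e i) = a powi (\<Sum>i\<in>I. e i)"
  by (induction I rule: infinite_finite_induct) (auto simp: power_int_add)

lemma char_val_basis_monomial:
  assumes "finite B" "\<forall>u\<in>B. c u \<noteq> 0"
  shows "char_val m (\<chi> i. \<Prod>u\<in>B. c u powi (u$i)) = (\<Prod>u\<in>B. c u powi lat_inner m u)"
proof -
  have "char_val m (\<chi> i. \<Prod>u\<in>B. c u powi (u$i)) = (\<Prod>i\<in>UNIV. \<Prod>u\<in>B. c u powi (u$i * m$i))"
    unfolding char_val_def by (simp add: prod_power_int_distrib power_int_mult)
  also have "\<dots> = (\<Prod>u\<in>B. \<Prod>i\<in>UNIV. c u powi (u$i * m$i))" by (rule prod.swap)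
  also have "\<dots> = (\<Prod>u\<in>B. c u powi lat_inner m u)"
    by (rule prod.cong[OF refl]) (simp add: prod_power_int_add assms(2) lat_inner_def mult.commute)
  finally show ?thesis .
qed

lemma basis_monomial_in_torus:
  "finite B \<Longrightarrow> \<forall>u\<in>B. c u \<noteq> 0 \<Longrightarrow> (\<chi> i. \<Prod>u\<in>B. c u powi (u$i)) \<in> torus"
  unfolding torus_def by (simp add: power_int_not_zero)

lemma char_hom_perp_gen_cone:
  assumes "finite B" "S \<subseteq> B"
    and dual: "\<And>u u'. u \<in> B \<Longrightarrow> u' \<in> B \<Longrightarrow> lat_inner (md u) u' = (if u = u' then 1 else 0)"
    and expand: "\<And>x. x = (\<Sum>u\<in>B. lat_inner x u *s md u)"
    and "char_hom (perp (gen_cone S)) \<gamma>" "m \<in> perp (gen_cone S)"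
  shows "\<gamma> m = (\<Prod>u\<in>B - S. \<gamma> (md u) powi lat_inner m u)"
proof -
  have finS: "finite S" using assms(1,2) finite_subset by blast
  have md: "md u \<in> perp (gen_cone S)" if "u \<in> B - S" for u
    using that assms(2) dual unfolding perp_gen_cone_iff[OF finS] by auto
  have "lat_inner m u = 0" if "u \<in> S" for u
    using assms(6) that unfolding perp_gen_cone_iff[OF finS] by blast
  then have "(\<Sum>u\<in>B. lat_inner m u *s md u) = (\<Sum>u\<in>B - S. lat_inner m u *s md u)"
    by (intro sum.mono_neutral_right) (use assms(1) in \<open>auto simp: vec_eq_iff\<close>)
  then have "\<gamma> m = \<gamma> (\<Sum>u\<in>B - S. lat_inner m u *s md u)"
    using expand[of m] by simp
  also have "\<dots> = (\<Prod>u\<in>B - S. \<gamma> (lat_inner m u *s md u))"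
    by (rule char_hom_sum[OF perp_lattice_subgroup assms(5)])
      (use md lattice_subgroup_smult[OF perp_lattice_subgroup] in blast)
  also have "\<dots> = (\<Prod>u\<in>B - S. \<gamma> (md u) powi lat_inner m u)"
    by (rule prod.cong) (simp_all add: char_hom_smult[OF perp_lattice_subgroup assms(5) md])
  finally show ?thesis .
qed

lemma tendsto_power_int_pos_mult_0:
  fixes f :: "nat \<Rightarrow> 'a :: real_normed_field"
  assumes "(f \<longlongrightarrow> 0) sequentially" "e > 0"
  shows "((\<lambda>k. f k powi e * C) \<longlongrightarrow> 0) sequentially"
proof -
  obtain n where e: "e = int (Suc n)" using assms(2) by (intro that[of "nat e - 1"]) simp
  have "((\<lambda>k. f k ^ Suc n * C) \<longlongrightarrow> 0 ^ Suc n * C) sequentially"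
    by (intro tendsto_intros assms(1))
  then show ?thesis unfolding e power_int_of_nat by simp
qed

text \<open>Every point of the orbit O(\<rho>) of a smooth cone \<rho> = cone(S), S part of a basis B, is a
  limit of torus points: keep the coordinates dual to B - S fixed at the values of the point and
  let the coordinates dual to S tend to 0.\<close>
lemma smooth_orbit_point_torus_limit:
  assumes "smooth_cone \<rho>" "p \<in> toric_points H" "fst p = \<rho>"
  obtains t where "\<And>k. t k \<in> torus" "\<And>k m. m \<in> perp \<rho> \<Longrightarrow> char_val m (t k) = snd p m"
    and "\<And>m. m \<in> dual_lat \<rho> \<Longrightarrow> ((\<lambda>k. char_val m (t k)) \<longlongrightarrow> snd p m) sequentially"
proof -
  obtain B S where B: "integral_basis UNIV B" and SB: "S \<subseteq> B" and \<rho>: "\<rho> = gen_cone S"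
    using assms(1) unfolding smooth_cone_def by blast
  have fin: "finite B" using B unfolding integral_basis_def by blast
  have finS: "finite S" using fin SB finite_subset by blast
  obtain md where dual: "\<And>u u'. u \<in> B \<Longrightarrow> u' \<in> B \<Longrightarrow> lat_inner (md u) u' = (if u = u' then 1 else 0)"
    and expand: "\<And>x. x = (\<Sum>u\<in>B. lat_inner x u *s md u)"
    using integral_basis_dual[OF B] by blast
  have \<gamma>: "char_hom (perp \<rho>) (snd p)" using toric_pointsD(2)[OF assms(2)] assms(3) by simp
  have md_nonzero: "snd p (md u) \<noteq> 0" if "u \<in> B - S" for u
  proof -
    have "md u \<in> perp \<rho>" unfolding \<rho> perp_gen_cone_iff[OF finS] using that SB dual by auto
    then show ?thesis using \<gamma> unfolding char_hom_def by blast
  qed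
  define s :: "nat \<Rightarrow> complex" where "s k = of_real (inverse (real (Suc k)))" for k
  have s_nonzero: "s k \<noteq> 0" for k unfolding s_def of_real_eq_0_iff by simp
  define c where "c k u = (if u \<in> S then s k else snd p (md u))" for k u
  have c_nonzero: "\<forall>u\<in>B. c k u \<noteq> 0" for k using s_nonzero md_nonzero unfolding c_def by auto
  define t where "t k = (\<chi> i. \<Prod>u\<in>B. c k u powi (u$i))" for k
  define C where "C m = (\<Prod>u\<in>B - S. snd p (md u) powi lat_inner m u)" for m
  have char_val_t: "char_val m (t k) = s k powi (\<Sum>u\<in>S. lat_inner m u) * C m" for m k
  proof -
    have "char_val m (t k) = (\<Prod>u\<in>S. c k u powi lat_inner m u) * (\<Prod>u\<in>B - S. c k u powi lat_inner m u)"
      unfolding t_def char_val_basis_monomial[OF fin c_nonzero] using prod.subset_diff[OF SB fin]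
      by (simp add: mult.commute)
    then show ?thesis unfolding c_def C_def by (simp add: prod_power_int_add[OF s_nonzero])
  qed
  have on_perp: "char_val m (t k) = snd p m" if "m \<in> perp \<rho>" for m k
    using that char_hom_perp_gen_cone[OF fin SB dual expand] \<gamma>
    unfolding char_val_t C_def \<rho> perp_gen_cone_iff[OF finS] by simp
  have "((\<lambda>k. char_val m (t k)) \<longlongrightarrow> snd p m) sequentially" if m: "m \<in> dual_lat \<rho>" for m
  proof (cases "m \<in> perp \<rho>")
    case True
    then show ?thesis using on_perp by simp
  next
    case False
    then obtain u0 where "u0 \<in> S" "lat_inner m u0 \<noteq> 0" unfolding \<rho> perp_gen_cone_iff[OF finS] by blast
    moreover have "\<forall>u\<in>S. lat_inner m u \<ge> 0"
      using m dual_lat_gen_cone_nonneg[OF finS] unfolding \<rho> by blast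
    ultimately have "(\<Sum>u\<in>S. lat_inner m u) > 0"
      by (intro sum_pos2[OF finS \<open>u0 \<in> S\<close>]) auto
    moreover have "(s \<longlongrightarrow> 0) sequentially"
      unfolding s_def[abs_def] using tendsto_of_real[OF LIMSEQ_inverse_real_of_nat]
      by (simp only: of_real_0)
    moreover have "snd p m = 0" using toric_pointsD(3)[OF assms(2)] False assms(3) by blast
    ultimately show ?thesis unfolding char_val_t by (simp add: tendsto_power_int_pos_mult_0)
  qed
  moreover have "t k \<in> torus" for k unfolding t_def by (rule basis_monomial_in_torus[OF fin c_nonzero])
  ultimately show ?thesis using that on_perp by blast
qed

section \<open>Closures of layers\<close>

text \<open>By closure_of_layer this is the closure of K_{\<Gamma>,\<phi>} in X_H whenever \<Gamma> has an integral
  basis of equal sign with respect to the smooth fan H.\<close>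
definition layer_closure :: "(real^'n) set set \<Rightarrow> (int^'n) set \<Rightarrow> (int^'n \<Rightarrow> complex) \<Rightarrow> 'n toric_pt set"
  where "layer_closure H \<Gamma> \<phi> = {p \<in> toric_points H. \<Gamma> \<subseteq> perp (fst p) \<and> (\<forall>chi\<in>\<Gamma>. snd p chi = \<phi> chi)}"

lemma layer_closure_inter_chart:
  assumes "lattice_subgroup \<Gamma>" "char_hom \<Gamma> \<phi>" "integral_basis \<Gamma> B" "\<And>b. s b = b \<or> s b = - b"
  shows "layer_closure H \<Gamma> \<phi> \<inter> toric_chart H \<sigma> = {p \<in> toric_chart H \<sigma>. \<forall>b\<in>B. snd p (s b) = \<phi> (s b)}"
proof (intro equalityI subsetI)
  have B: "B \<subseteq> \<Gamma>" "int_span B = \<Gamma>" using assms(3) unfolding integral_basis_def by auto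
  have s_mem: "s b \<in> \<Gamma>" if "b \<in> B" for b
    using assms(4)[of b] B that lattice_subgroup_uminus_iff[OF assms(1)] by auto
  fix p
  show "p \<in> {p \<in> toric_chart H \<sigma>. \<forall>b\<in>B. snd p (s b) = \<phi> (s b)}"
    if "p \<in> layer_closure H \<Gamma> \<phi> \<inter> toric_chart H \<sigma>"
    using that s_mem unfolding layer_closure_def by blast
  assume "p \<in> {p \<in> toric_chart H \<sigma>. \<forall>b\<in>B. snd p (s b) = \<phi> (s b)}"
  then have chart: "p \<in> toric_chart H \<sigma>" and eqs: "\<forall>b\<in>B. snd p (s b) = \<phi> (s b)" by blast+
  have pts: "p \<in> toric_points H" using chart toric_chart_subset by blast
  have \<gamma>: "char_hom (perp (fst p)) (snd p)" using toric_pointsD(2)[OF pts] .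
  have b_perp: "b \<in> perp (fst p)" if "b \<in> B" for b
  proof -
    text \<open>\<phi> does not vanish, while the coordinates of p vanish off (fst p)^\<bottom>.\<close>
    have "s b \<in> perp (fst p)"
      using eqs that toric_pointsD(3)[OF pts] s_mem[OF that] assms(2) unfolding char_hom_def by metis
    then show ?thesis using assms(4)[of b] lattice_subgroup_uminus_iff[OF perp_lattice_subgroup] by metis
  qed
  then have \<Gamma>_perp: "\<Gamma> \<subseteq> perp (fst p)" using int_span_subset[OF perp_lattice_subgroup] B by blast
  have "snd p b = \<phi> b" if "b \<in> B" for b
    using assms(4)[of b] eqs that char_hom_uminus[OF perp_lattice_subgroup \<gamma> b_perp[OF that]]
      char_hom_uminus[OF assms(1,2)] B by (metis inverse_inverse_eq subsetD)
  then have "\<forall>chi\<in>\<Gamma>. snd p chi = \<phi> chi"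
    using char_hom_eq_on_integral_basis[OF assms(1,3) perp_lattice_subgroup \<Gamma>_perp \<gamma> assms(2)] by blast
  then show "p \<in> layer_closure H \<Gamma> \<phi> \<inter> toric_chart H \<sigma>"
    unfolding layer_closure_def using pts chart \<Gamma>_perp by blast
qed

text \<open>On the chart U_\<sigma> each basis character or its inverse is a coordinate function,
  since B has equal sign on \<sigma>.\<close>
lemma closedin_layer_closure:
  assumes "lattice_subgroup \<Gamma>" "char_hom \<Gamma> \<phi>" "integral_basis \<Gamma> B" "equal_sign H B"
  shows "closedin (toric_topology H) (layer_closure H \<Gamma> \<phi>)"
proof (rule closedin_toric_topology)
  show "layer_closure H \<Gamma> \<phi> \<subseteq> toric_points H" unfolding layer_closure_def by blast
  fix \<sigma> assume "\<sigma> \<in> H"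
  define s where "s b = (if \<forall>v\<in>\<sigma>. pairing b v \<ge> 0 then b else - b)" for b
  have "\<forall>b\<in>B. s b \<in> dual_lat \<sigma>"
    using assms(4) \<open>\<sigma> \<in> H\<close> unfolding equal_sign_def s_def dual_lat_def by (auto simp: pairing_uminus)
  moreover have "finite B" using assms(3) unfolding integral_basis_def by blast
  moreover have sign: "\<And>b. s b = b \<or> s b = - b" unfolding s_def by simp
  ultimately show "closedin (chart_topology H \<sigma>) (layer_closure H \<Gamma> \<phi> \<inter> toric_chart H \<sigma>)"
    unfolding layer_closure_inter_chart[OF assms(1-3) sign] by (intro closedin_chart_coordinate_equations)
qed

lemma torus_emb_layer_subset_layer_closure:
  assumes "fan H" shows "torus_emb ` layer \<Gamma> \<phi> \<subseteq> layer_closure H \<Gamma> \<phi>"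
  using torus_emb_in_toric_points[OF assms] perp_singleton_zero
  unfolding layer_def layer_closure_def by (auto simp: torus_emb_def)

lemma layer_closure_subset_closure_of:
  assumes "fan H" "\<forall>\<sigma>\<in>H. smooth_cone \<sigma>"
  shows "layer_closure H \<Gamma> \<phi> \<subseteq> (toric_topology H) closure_of (torus_emb ` layer \<Gamma> \<phi>)"
proof
  fix p assume "p \<in> layer_closure H \<Gamma> \<phi>"
  then have pts: "p \<in> toric_points H" and \<Gamma>_perp: "\<Gamma> \<subseteq> perp (fst p)"
    and eqs: "\<forall>chi\<in>\<Gamma>. snd p chi = \<phi> chi" unfolding layer_closure_def by blast+
  have \<rho>: "fst p \<in> H" using toric_pointsD(1)[OF pts] .
  obtain t where t: "\<And>k. t k \<in> torus" "\<And>k m. m \<in> perp (fst p) \<Longrightarrow> char_val m (t k) = snd p m"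
    and lim: "\<And>m. m \<in> dual_lat (fst p) \<Longrightarrow> ((\<lambda>k. char_val m (t k)) \<longlongrightarrow> snd p m) sequentially"
    using smooth_orbit_point_torus_limit[OF _ pts refl] assms(2) \<rho> by blast
  have "t k \<in> layer \<Gamma> \<phi>" for k unfolding layer_def using t \<Gamma>_perp eqs by auto
  then have seq: "torus_emb (t k) \<in> toric_chart H (fst p) \<inter> torus_emb ` layer \<Gamma> \<phi>" for k
    using torus_emb_in_toric_chart[OF assms(1) \<rho> t(1)] by blast
  have "p \<in> toric_chart H (fst p)" unfolding toric_chart_def using pts by simp
  then show "p \<in> (toric_topology H) closure_of (torus_emb ` layer \<Gamma> \<phi>)"
    by (rule in_closure_of_toric_if_chart_limit[where q = "\<lambda>k. torus_emb (t k)", OF \<rho> _ seq])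
      (simp add: lim torus_emb_def)
qed

theorem closure_of_layer:
  assumes "fan H" "\<forall>\<sigma>\<in>H. smooth_cone \<sigma>" "lattice_subgroup \<Gamma>" "char_hom \<Gamma> \<phi>"
    and "integral_basis \<Gamma> B" "equal_sign H B"
  shows "(toric_topology H) closure_of (torus_emb ` layer \<Gamma> \<phi>) = layer_closure H \<Gamma> \<phi>"
  using closure_of_minimal[OF torus_emb_layer_subset_layer_closure[OF assms(1)]
      closedin_layer_closure[OF assms(3-6)]] layer_closure_subset_closure_of[OF assms(1,2)]
  by blast

section \<open>Refinements\<close>

lemma equal_sign_refinement:
  assumes "equal_sign F B" "refinement G F" shows "equal_sign G B"
  unfolding equal_sign_def
proof (intro ballI)
  fix chi C assume "chi \<in> B" "C \<in> G"
  then obtain \<sigma> where "\<sigma> \<in> F" "C \<subseteq> \<sigma>" using assms(2) unfolding refinement_def by blast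
  then show "(\<forall>v\<in>C. pairing chi v \<ge> 0) \<or> (\<forall>v\<in>C. pairing chi v \<le> 0)"
    using assms(1) \<open>chi \<in> B\<close> unfolding equal_sign_def by blast
qed

lemma compatible_refinement: "compatible F A \<Longrightarrow> refinement G F \<Longrightarrow> compatible G A"
  unfolding compatible_def using equal_sign_refinement by metis

lemma refinement_map_in_toric_points:
  assumes "fan F" "refinement G F" "p \<in> toric_points G"
  shows "toric_refinement_map F p \<in> toric_points F"
proof -
  let ?\<sigma> = "min_cone F (fst p)"
  have "fst p \<in> G" using toric_pointsD(1)[OF assms(3)] .
  then have "?\<sigma> \<in> F" using min_cone_mem[OF assms(1,2)] by blast
  moreover have "perp ?\<sigma> \<subseteq> perp (fst p)" by (rule perp_antimono[OF subset_min_cone])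
  moreover have "lattice_subgroup (perp ?\<sigma>)" by (rule perp_lattice_subgroup)
  ultimately show ?thesis
    using toric_pointsD(2)[OF assms(3)]
    unfolding toric_refinement_map_def toric_points_def char_hom_def lattice_subgroup_def
    by (auto simp: Let_def subset_iff)
qed

lemma perp_min_cone_of_equal_sign:
  assumes "fan F" "refinement G F" "\<rho> \<in> G" "integral_basis \<Gamma> B" "equal_sign F B" "\<Gamma> \<subseteq> perp \<rho>"
  shows "\<Gamma> \<subseteq> perp (min_cone F \<rho>)"
proof -
  have "\<forall>v\<in>\<rho>. pairing b v = 0" if "b \<in> B" for b
    using that assms(4,6) unfolding integral_basis_def perp_def by blast
  then have "pairing b v = 0" if "b \<in> B" "v \<in> min_cone F \<rho>" for b v
    using min_cone_orthogonal[OF assms(1-3,5)] that by blast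
  then show ?thesis
    using pairing_integral_basis_eq_0[OF assms(4)] unfolding perp_def by blast
qed

theorem refinement_map_preimage_layer_closure:
  assumes "fan F" "refinement G F" "integral_basis \<Gamma> B" "equal_sign F B"
  shows "{p \<in> toric_points G. toric_refinement_map F p \<in> layer_closure F \<Gamma> \<phi>} = layer_closure G \<Gamma> \<phi>"
proof (intro equalityI subsetI)
  fix p assume "p \<in> {p \<in> toric_points G. toric_refinement_map F p \<in> layer_closure F \<Gamma> \<phi>}"
  then have pts: "p \<in> toric_points G" and
    "\<Gamma> \<subseteq> perp (min_cone F (fst p))" "\<forall>chi\<in>\<Gamma>. snd p chi = \<phi> chi"
    unfolding layer_closure_def toric_refinement_map_def by (auto simp: Let_def split: if_splits)
  then show "p \<in> layer_closure G \<Gamma> \<phi>"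
    using perp_antimono[OF subset_min_cone] unfolding layer_closure_def by blast
next
  fix p assume "p \<in> layer_closure G \<Gamma> \<phi>"
  then have pts: "p \<in> toric_points G" and "\<Gamma> \<subseteq> perp (fst p)" "\<forall>chi\<in>\<Gamma>. snd p chi = \<phi> chi"
    unfolding layer_closure_def by blast+
  moreover have "\<Gamma> \<subseteq> perp (min_cone F (fst p))"
    using perp_min_cone_of_equal_sign[OF assms(1,2) toric_pointsD(1)[OF pts] assms(3,4)] calculation(2) .
  ultimately show "p \<in> {p \<in> toric_points G. toric_refinement_map F p \<in> layer_closure F \<Gamma> \<phi>}"
    using refinement_map_in_toric_points[OF assms(1,2) pts]
    unfolding layer_closure_def toric_refinement_map_def by (auto simp: Let_def)
qed

theorem proposition5p1:
  fixes A :: "(complex^'n) set set"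
    and F G :: "(real^'n) set set"
  assumes "saturated_toric_arrangement A"
    and "smooth_projective_fan F"
    and "compatible F A"
    and "smooth_projective_fan G"
    and "refinement G F"
  shows "(\<forall>K\<in>A. {p \<in> toric_points G. toric_refinement_map F p \<in>
              (toric_topology F) closure_of (torus_emb ` K)}
            = (toric_topology G) closure_of (torus_emb ` K))
         \<and> compatible G A"
proof (intro conjI ballI)
  have F: "fan F" "\<forall>\<sigma>\<in>F. smooth_cone \<sigma>" and G: "fan G" "\<forall>\<sigma>\<in>G. smooth_cone \<sigma>"
    using assms(2,4) unfolding smooth_projective_fan_def by blast+
  fix K assume "K \<in> A"
  then have "is_layer K" using assms(1) unfolding saturated_toric_arrangement_def by blast
  then obtain \<Gamma> \<phi> where \<Gamma>: "split_summand \<Gamma>" "char_hom \<Gamma> \<phi>" and K: "K = layer \<Gamma> \<phi>"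
    unfolding is_layer_def by blast
  have "lattice_subgroup \<Gamma>" using \<Gamma>(1) unfolding split_summand_def by blast
  text \<open>Compatibility applied to the trivial inclusion K \<subseteq> K supplies an equal-sign basis.\<close>
  obtain B where B: "integral_basis \<Gamma> B" "equal_sign F B"
    using assms(3) \<Gamma> \<open>K \<in> A\<close> unfolding compatible_def K by blast
  show "{p \<in> toric_points G. toric_refinement_map F p \<in> (toric_topology F) closure_of (torus_emb ` K)}
      = (toric_topology G) closure_of (torus_emb ` K)"
    unfolding K closure_of_layer[OF F \<open>lattice_subgroup \<Gamma>\<close> \<Gamma>(2) B]
      closure_of_layer[OF G \<open>lattice_subgroup \<Gamma>\<close> \<Gamma>(2) B(1) equal_sign_refinement[OF B(2) assms(5)]]
    by (rule refinement_map_preimage_layer_closure[OF F(1) assms(5) B])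
qed (rule compatible_refinement[OF assms(3,5)])

end
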